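(* For every $e\in\mathtt{CA}$ and all $c,d\in\mathtt{CA}$, \[\delta(e\circ c,e\circ d)\le(2r(e)+1)\,\delta(c,d).\] In particular, $c\mapsto e\circ c$ is Lipschitz continuous on $(\mathtt{CA},\delta)$.
   Context: $\Sigma$ is a finite alphabet with $|\Sigma|\ge2$. For $r\in\mathbb{N}$, $N(r)=[-r,r]$. A cellular automaton (CA) is a map $c:\Sigma^\mathbb{Z}\to\Sigma^\mathbb{Z}$ of the form $c(x)_i=F(x_{[i-r,i+r]})$ for some local function $F:\Sigma^{N(r)}\to\Sigma$; any such $r$ is a radius and $r(c)$ denotes the minimal radius. $\mathtt{CA}$ is the set of all CA. For $c,d\in\mathtt{CA}$ with common radius $r$, $D^c_d=\{w\in\Sigma^{N(r)}\mid$ the local rules of $c$ and $d$ give different outputs on $w\}$ (equivalently, $c(x)_0\neq d(x)_0$ for $x_{[-r,r]}=w$), and $\delta(c,d)=|D^c_d|/|\Sigma|^{2r+1}$, independent of $r$. *)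

theory Defs
  imports Complex_Main "HOL-Library.FuncSet"
begin

type_synonym 'a config = "int \<Rightarrow> 'a"

definition nbhd :: "nat \<Rightarrow> int set" where
  "nbhd r = {- int r .. int r}"

definition is_radius :: "('a config \<Rightarrow> 'a config) \<Rightarrow> nat \<Rightarrow> bool" where
  "is_radius c r \<longleftrightarrow>
     (\<exists>F :: (int \<Rightarrow> 'a) \<Rightarrow> 'a. \<forall>x i. c x i = F (restrict (\<lambda>j. x (i + j)) (nbhd r)))"

definition is_CA :: "('a config \<Rightarrow> 'a config) \<Rightarrow> bool" where
  "is_CA c \<longleftrightarrow> (\<exists>r. is_radius c r)"

definition min_radius :: "('a config \<Rightarrow> 'a config) \<Rightarrow> nat" where
  "min_radius c = (LEAST r. is_radius c r)"

text \<open>A configuration extending a pattern w on N(r) (arbitrary outside).\<close>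
definition extend :: "(int \<Rightarrow> 'a) \<Rightarrow> 'a config" where
  "extend w = w"

definition diff_set :: "nat \<Rightarrow> ('a config \<Rightarrow> 'a config) \<Rightarrow> ('a config \<Rightarrow> 'a config) \<Rightarrow> (int \<Rightarrow> 'a) set" where
  "diff_set r c d = {w \<in> PiE (nbhd r) (\<lambda>_. UNIV). c (extend w) 0 \<noteq> d (extend w) 0}"

definition delta :: "('a::finite config \<Rightarrow> 'a config) \<Rightarrow> ('a config \<Rightarrow> 'a config) \<Rightarrow> real" where
  "delta c d = (let r = max (min_radius c) (min_radius d) in
     real (card (diff_set r c d)) / (real (card (UNIV :: 'a set))) ^ (2 * r + 1))"

end

theory Submission
  imports Defs
begin

text \<open>
  For an event g on configurations that depends only on the cells in a finite
  window W, let density W g be the fraction of patterns on W satisfying g. This number does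
  not change when W is enlarged, nor when the event and the window are translated together,
  and it is subadditive over finite unions. Now delta c d is the density of the event
  "c x 0 \<noteq> d x 0" on N(r), and if (e \<circ> c) x 0 \<noteq> (e \<circ> d) x 0, then, e having radius r(e),
  some cell i \<in> N(r(e)) has c x i \<noteq> d x i. Working in the common window N(r(e) + r),
  which determines all these events, the union bound yields a sum of 2 r(e) + 1 terms,
  each of which is the density of a translate of the event defining delta c d.
\<close>

section \<open>Densities of finitely determined events\<close>

definition depends_on :: "int set \<Rightarrow> ('a config \<Rightarrow> bool) \<Rightarrow> bool" where
  "depends_on A g \<longleftrightarrow> (\<forall>x y. (\<forall>j\<in>A. x j = y j) \<longrightarrow> g x = g y)"

definition pattern_count :: "int set \<Rightarrow> ('a config \<Rightarrow> bool) \<Rightarrow> nat" where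
  "pattern_count W g = card {w \<in> PiE W (\<lambda>_. UNIV). g w}"

definition density :: "int set \<Rightarrow> ('a::finite config \<Rightarrow> bool) \<Rightarrow> real" where
  "density W g = real (pattern_count W g) / real (card (UNIV::'a set)) ^ card W"

lemma depends_on_mono: "depends_on A g \<Longrightarrow> A \<subseteq> B \<Longrightarrow> depends_on B g"
  unfolding depends_on_def by blast

lemma depends_on_shift:
  "depends_on A g \<Longrightarrow> depends_on ((+) i ` A) (\<lambda>x. g (\<lambda>j. x (i + j)))"
  unfolding depends_on_def by (metis (no_types, lifting) image_eqI)

text \<open>Adding a cell a the event ignores multiplies the count by the alphabet size, since
  patterns on insert a W are pairs (letter at a, pattern on W).\<close>
lemma pattern_count_insert:
  fixes g :: "'a::finite config \<Rightarrow> bool"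
  assumes "a \<notin> W" "depends_on W g"
  shows "pattern_count (insert a W) g = card (UNIV::'a set) * pattern_count W g"
proof -
  have ignores_a: "g (f(a := y)) = g f" for f y
    using assms unfolding depends_on_def by (metis fun_upd_other)
  have split: "{w \<in> PiE (insert a W) (\<lambda>_. UNIV). g w}
      = (\<lambda>(y, f). f(a := y)) ` (UNIV \<times> {f \<in> PiE W (\<lambda>_. UNIV). g f})"
    unfolding PiE_insert_eq using ignores_a by auto
  have inj: "inj_on (\<lambda>(y, f). f(a := y)) (UNIV \<times> {f \<in> PiE W (\<lambda>_. UNIV::'a set). g f})"
    by (rule inj_on_subset[OF inj_combinator[OF assms(1), of "\<lambda>_. UNIV"]]) auto
  show ?thesis
    unfolding pattern_count_def split card_image[OF inj] card_cartesian_product by simp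
qed

lemma pattern_count_union:
  fixes g :: "'a::finite config \<Rightarrow> bool"
  assumes "finite B" "depends_on A g"
  shows "pattern_count (A \<union> B) g = card (UNIV::'a set) ^ card (B - A) * pattern_count A g"
  using assms(1)
proof (induction B rule: finite_induct)
  case empty
  then show ?case by simp
next
  case (insert b B)
  show ?case
  proof (cases "b \<in> A")
    case True
    then have "A \<union> insert b B = A \<union> B" "insert b B - A = B - A" by auto
    then show ?thesis using insert by simp
  next
    case False
    then have eqs: "A \<union> insert b B = insert b (A \<union> B)" "insert b B - A = insert b (B - A)"
      and fresh: "b \<notin> A \<union> B" "b \<notin> B - A" using insert by auto
    have "pattern_count (insert b (A \<union> B)) g = card (UNIV::'a set) * pattern_count (A \<union> B) g"
      using fresh depends_on_mono[OF assms(2)] by (intro pattern_count_insert) auto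
    then show ?thesis unfolding eqs using insert fresh by simp
  qed
qed

lemma density_superset:
  fixes g :: "'a::finite config \<Rightarrow> bool"
  assumes "finite W" "A \<subseteq> W" "depends_on A g"
  shows "density W g = density A g"
proof -
  have W: "W = A \<union> (W - A)" and finA: "finite A" using assms finite_subset by auto
  have card_W: "card W = card A + card (W - A)"
    using finA assms(1) W by (metis card_Un_disjoint Diff_disjoint finite_Diff)
  have "pattern_count W g = card (UNIV::'a set) ^ card (W - A) * pattern_count A g"
    using pattern_count_union[OF _ assms(3), of "W - A"] assms(1) W by simp
  moreover have "real (card (UNIV::'a set)) > 0" by (simp add: finite_UNIV_card_ge_0)
  ultimately show ?thesis unfolding density_def card_W by (simp add: power_add)
qed

text \<open>Densities are translation invariant: reindexing patterns by j \<mapsto> i + j is a bijection.\<close>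
lemma pattern_count_shift:
  fixes g :: "'a::finite config \<Rightarrow> bool"
  assumes "depends_on A g"
  shows "pattern_count ((+) i ` A) (\<lambda>x. g (\<lambda>j. x (i + j))) = pattern_count A g"
proof -
  let ?f = "\<lambda>w::'a config. restrict (\<lambda>j. w (i + j)) A"
  let ?f' = "\<lambda>u::'a config. restrict (\<lambda>j. u (j - i)) ((+) i ` A)"
  let ?S = "{w \<in> PiE ((+) i ` A) (\<lambda>_. UNIV). g (\<lambda>j. w (i + j))}"
  let ?T = "{u \<in> PiE A (\<lambda>_. UNIV). g u}"
  have g_restrict: "g (\<lambda>j. w (i + j)) = g (?f w)" for w
    using assms unfolding depends_on_def by auto
  have inv: "?f (?f' u) = u" if "u \<in> PiE A (\<lambda>_. UNIV)" for u
    using that by (auto simp: PiE_def extensional_def fun_eq_iff)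
  have "bij_betw ?f ?S ?T"
  proof (rule bij_betw_byWitness[where f'="?f'"])
    show "\<forall>a\<in>?S. ?f' (?f a) = a"
      by (auto simp: PiE_def extensional_def fun_eq_iff)
    show "\<forall>a\<in>?T. ?f (?f' a) = a" using inv by blast
    show "?f ` ?S \<subseteq> ?T" using g_restrict by auto
    show "?f' ` ?T \<subseteq> ?S" using g_restrict inv by (auto simp: PiE_def extensional_def)
  qed
  then show ?thesis unfolding pattern_count_def by (rule bij_betw_same_card)
qed

lemma density_shift:
  fixes g :: "'a::finite config \<Rightarrow> bool"
  assumes "depends_on A g"
  shows "density ((+) i ` A) (\<lambda>x. g (\<lambda>j. x (i + j))) = density A g"
  unfolding density_def pattern_count_shift[OF assms] by (simp add: card_image)

lemma density_union_bound:
  fixes g :: "'i \<Rightarrow> 'a::finite config \<Rightarrow> bool"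
  assumes "finite I" "finite W" "\<And>x. h x \<Longrightarrow> \<exists>i\<in>I. g i x"
  shows "density W h \<le> (\<Sum>i\<in>I. density W (g i))"
proof -
  have finP: "finite (PiE W (\<lambda>_. UNIV::'a set))" using assms(2) by (simp add: finite_PiE)
  have "{w \<in> PiE W (\<lambda>_. UNIV). h w} \<subseteq> (\<Union>i\<in>I. {w \<in> PiE W (\<lambda>_. UNIV). g i w})"
    using assms(3) by auto
  then have "pattern_count W h \<le> card (\<Union>i\<in>I. {w \<in> PiE W (\<lambda>_. UNIV). g i w})"
    unfolding pattern_count_def using assms(1) finP by (intro card_mono) auto
  also have "\<dots> \<le> (\<Sum>i\<in>I. pattern_count W (g i))"
    unfolding pattern_count_def by (rule card_UN_le[OF assms(1)])
  finally have "real (pattern_count W h) \<le> (\<Sum>i\<in>I. real (pattern_count W (g i)))"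
    by (metis of_nat_le_iff of_nat_sum)
  then show ?thesis unfolding density_def sum_divide_distrib[symmetric]
    by (intro divide_right_mono) auto
qed

section \<open>Locality of cellular automata\<close>

lemma radius_local:
  assumes "is_radius c r" "\<forall>j\<in>nbhd r. x (i + j) = y (i + j)"
  shows "c x i = c y i"
proof -
  obtain F where F: "\<forall>x i. c x i = F (restrict (\<lambda>j. x (i + j)) (nbhd r))"
    using assms(1) unfolding is_radius_def by blast
  have "restrict (\<lambda>j. x (i + j)) (nbhd r) = restrict (\<lambda>j. y (i + j)) (nbhd r)"
    using assms(2) by (auto simp: fun_eq_iff)
  then show ?thesis using F by metis
qed

lemma radius_shift:
  assumes "is_radius c r"
  shows "c x i = c (\<lambda>j. x (i + j)) 0"
  using assms unfolding is_radius_def by auto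

lemma radius_mono:
  assumes "is_radius c r" "r \<le> s"
  shows "is_radius c s"
proof -
  obtain F where F: "\<forall>x i. c x i = F (restrict (\<lambda>j. x (i + j)) (nbhd r))"
    using assms(1) unfolding is_radius_def by blast
  have "nbhd r \<subseteq> nbhd s" using assms(2) by (auto simp: nbhd_def)
  then have "c x i = F (restrict (restrict (\<lambda>j. x (i + j)) (nbhd s)) (nbhd r))" for x i
    using F by (metis restrict_restrict inf.absorb2)
  then show ?thesis
    unfolding is_radius_def by (intro exI[of _ "\<lambda>p. F (restrict p (nbhd r))"]) simp
qed

text \<open>Radii add under composition: (e \<circ> c) x i is computed from the values of c on
  i + N(a), each of which is computed from x on a translate of N(b) inside i + N(a + b).\<close>
lemma radius_comp:
  assumes "is_radius e a" "is_radius c b"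
  shows "is_radius (e \<circ> c) (a + b)"
proof -
  obtain Fe where Fe: "\<forall>x i. e x i = Fe (restrict (\<lambda>j. x (i + j)) (nbhd a))"
    using assms(1) unfolding is_radius_def by blast
  obtain Fc where Fc: "\<forall>x i. c x i = Fc (restrict (\<lambda>j. x (i + j)) (nbhd b))"
    using assms(2) unfolding is_radius_def by blast
  define F where
    "F p = Fe (restrict (\<lambda>j. Fc (restrict (\<lambda>k. p (j + k)) (nbhd b))) (nbhd a))" for p
  have "(e \<circ> c) x i = F (restrict (\<lambda>j. x (i + j)) (nbhd (a + b)))" for x i
  proof -
    have "c x (i + j) =
          Fc (restrict (\<lambda>k. restrict (\<lambda>j. x (i + j)) (nbhd (a + b)) (j + k)) (nbhd b))"
      if "j \<in> nbhd a" for j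
    proof -
      have "restrict (\<lambda>k. x (i + j + k)) (nbhd b) =
            restrict (\<lambda>k. restrict (\<lambda>j. x (i + j)) (nbhd (a + b)) (j + k)) (nbhd b)"
        using that by (auto simp: fun_eq_iff nbhd_def add.assoc)
      then show ?thesis using Fc by simp
    qed
    then have "restrict (\<lambda>j. c x (i + j)) (nbhd a) =
      restrict (\<lambda>j. Fc (restrict (\<lambda>k. restrict (\<lambda>j. x (i + j)) (nbhd (a + b)) (j + k)) (nbhd b)))
               (nbhd a)"
      by (intro restrict_ext) simp
    then show ?thesis using Fe unfolding F_def by simp
  qed
  then show ?thesis unfolding is_radius_def by blast
qed

lemma min_radius_is: "is_CA c \<Longrightarrow> is_radius c (min_radius c)"
  unfolding is_CA_def min_radius_def by (metis LeastI)

lemma min_radius_le: "is_radius c r \<Longrightarrow> min_radius c \<le> r"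
  unfolding min_radius_def by (rule Least_le)

lemma depends_on_disagreement:
  "is_radius c r \<Longrightarrow> is_radius d r \<Longrightarrow> depends_on (nbhd r) (\<lambda>x. c x 0 \<noteq> d x 0)"
  unfolding depends_on_def using radius_local[of c r _ 0] radius_local[of d r _ 0] by force

lemma card_nbhd: "card (nbhd r) = 2 * r + 1"
  unfolding nbhd_def by simp

lemma finite_nbhd: "finite (nbhd r)"
  unfolding nbhd_def by simp

lemma delta_density:
  fixes c :: "'a::finite config \<Rightarrow> 'a config"
  shows "delta c d = density (nbhd (max (min_radius c) (min_radius d))) (\<lambda>x. c x 0 \<noteq> d x 0)"
  unfolding delta_def density_def pattern_count_def diff_set_def extend_def card_nbhd Let_def
  by simp

lemma delta_common_radius:
  fixes c :: "'a::finite config \<Rightarrow> 'a config"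
  assumes "is_radius c r" "is_radius d r"
  shows "delta c d = density (nbhd r) (\<lambda>x. c x 0 \<noteq> d x 0)"
proof -
  let ?m = "max (min_radius c) (min_radius d)"
  have "?m \<le> r" using min_radius_le[OF assms(1)] min_radius_le[OF assms(2)] by simp
  moreover have "is_radius c ?m" "is_radius d ?m"
    using min_radius_is radius_mono is_CA_def assms by (metis max.cobounded1 max.cobounded2)+
  ultimately show ?thesis
    unfolding delta_density
    by (intro density_superset[symmetric] finite_nbhd depends_on_disagreement)
       (auto simp: nbhd_def)
qed

section \<open>The Lipschitz estimate\<close>

lemma disagreement_covered:
  assumes "is_radius e a" "e (c x) 0 \<noteq> e (d x) 0"
  shows "\<exists>i\<in>nbhd a. c x i \<noteq> d x i"
  using radius_local[OF assms(1), of "c x" 0 "d x"] assms(2) by auto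

lemma density_disagreement_at:
  fixes c d :: "'a::finite config \<Rightarrow> 'a config"
  assumes "is_radius c r" "is_radius d r" "i \<in> nbhd a"
  shows "density (nbhd (a + r)) (\<lambda>x. c x i \<noteq> d x i) = delta c d"
proof -
  let ?g = "\<lambda>x. c x 0 \<noteq> d x 0"
  have dep: "depends_on (nbhd r) ?g" by (rule depends_on_disagreement[OF assms(1,2)])
  have shifted: "(\<lambda>x. c x i \<noteq> d x i) = (\<lambda>x. ?g (\<lambda>j. x (i + j)))"
    using radius_shift[OF assms(1)] radius_shift[OF assms(2)] by (auto simp: fun_eq_iff)
  have window: "(+) i ` nbhd r \<subseteq> nbhd (a + r)" using assms(3) by (auto simp: nbhd_def)
  have "density (nbhd (a + r)) (\<lambda>x. c x i \<noteq> d x i)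
        = density ((+) i ` nbhd r) (\<lambda>x. ?g (\<lambda>j. x (i + j)))"
    unfolding shifted by (rule density_superset[OF finite_nbhd window depends_on_shift[OF dep]])
  also have "\<dots> = density (nbhd r) ?g" by (rule density_shift[OF dep])
  also have "\<dots> = delta c d" by (rule delta_common_radius[OF assms(1,2), symmetric])
  finally show ?thesis .
qed

lemma delta_comp_le:
  fixes e c d :: "'a::finite config \<Rightarrow> 'a config"
  assumes "is_CA e" "is_CA c" "is_CA d"
  shows "delta (e \<circ> c) (e \<circ> d) \<le> (2 * real (min_radius e) + 1) * delta c d"
proof -
  define a where "a = min_radius e"
  define r where "r = max (min_radius c) (min_radius d)"
  have e: "is_radius e a" using min_radius_is[OF assms(1)] a_def by simp
  have c: "is_radius c r" and d: "is_radius d r"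
    using min_radius_is[OF assms(2)] min_radius_is[OF assms(3)] radius_mono r_def
    by (metis max.cobounded1 max.cobounded2)+
  have "delta (e \<circ> c) (e \<circ> d) = density (nbhd (a + r)) (\<lambda>x. e (c x) 0 \<noteq> e (d x) 0)"
    using delta_common_radius[OF radius_comp[OF e c] radius_comp[OF e d]] by simp
  also have "\<dots> \<le> (\<Sum>i\<in>nbhd a. density (nbhd (a + r)) (\<lambda>x. c x i \<noteq> d x i))"
    using disagreement_covered[OF e] by (intro density_union_bound finite_nbhd)
  also have "\<dots> = (\<Sum>i\<in>nbhd a. delta c d)"
    using density_disagreement_at[OF c d] by simp
  also have "\<dots> = (2 * real (min_radius e) + 1) * delta c d"
    by (simp add: card_nbhd a_def)
  finally show ?thesis .
qed

theorem lemma4p1: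
  fixes e :: "'a::finite config \<Rightarrow> 'a config"
  assumes "card (UNIV :: 'a set) \<ge> 2"
    and "is_CA e"
  shows "(\<forall>c d. is_CA c \<longrightarrow> is_CA d \<longrightarrow>
           delta (e \<circ> c) (e \<circ> d) \<le> (2 * real (min_radius e) + 1) * delta c d)
         \<and> (\<exists>L. \<forall>c d. is_CA c \<longrightarrow> is_CA d \<longrightarrow> delta (e \<circ> c) (e \<circ> d) \<le> L * delta c d)"
  using delta_comp_le[OF assms(2)] by blast

end
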